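(* Let $0<a<b<1$ and $\varrho\ge0$ a function on $[a,b]$ with $\varrho/\zeta$ non-decreasing and bounded. Let $(u,\lambda)$, $u\in C^{0,1}([a,b])$, solve $u'+(\frac1x+\widetilde\varrho)u+\lambda\zeta=0$ a.e. on $(a,b)$ with $u(a)=1$, $u(b)=-1$, and assume $u>-1$ on $[a,b)$. Set $v:=-u$. Then (i) $\mu_u(t)\le\mu_v(t)$ for every $t\in(0,1)$; (ii) if $\varrho\not\equiv0$ on $[a,b)$, then $\mu_u(t)<\mu_v(t)$ for every $t\in(0,1)$.
   Context: $\zeta(t)=\frac2{1-t^2}$, $\widetilde\varrho(t)=t\zeta(t)+\varrho(t)$. $\mu$ is the measure $dx/x$ on $(0,\infty)$, and for a function $u$ on $[a,b]$, $\mu_u(t):=\mu(\{x\in[a,b]:u(x)>t\})$ for $t>0$. *)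

theory Defs
  imports "HOL-Analysis.Analysis"
begin

definition zeta :: "real \<Rightarrow> real" where
  "zeta t = 2 / (1 - t\<^sup>2)"

definition rho_tilde :: "(real \<Rightarrow> real) \<Rightarrow> real \<Rightarrow> real" where
  "rho_tilde \<rho> t = t * zeta t + \<rho> t"

text \<open>The measure dx/x on (0,infinity), realised as a measure on the reals
  with density 1/x on (0,infinity) and 0 elsewhere.\<close>
definition mu :: "real measure" where
  "mu = density lborel (\<lambda>x. ennreal (indicator {0<..} x / x))"

definition mu_dist :: "(real \<Rightarrow> real) \<Rightarrow> real \<Rightarrow> real \<Rightarrow> real \<Rightarrow> ennreal" where
  "mu_dist u a b t = emeasure mu {x \<in> {a..b}. u x > t}"

end

theory Submission
  imports Defs
begin

text \<open>
  For \<open>\<rho> = 0\<close> the problem is solved by \<open>U0 x = (ab/x - x)/(b - a)\<close> with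
  \<open>\<lambda> = l0 = (1 - ab)/(b - a)\<close>, and \<open>U0 (ab/x) = - U0 x\<close>. The reflection \<open>x \<mapsto> ab/x\<close>
  preserves \<open>dx/x\<close>, so \<open>{U0 > t} = [a, X)\<close> and \<open>{-U0 > t} = (ab/X, b]\<close> have the same
  measure \<open>ln (X/a)\<close>. The theorem therefore follows from the comparison \<open>u \<le> U0\<close>, strict in
  \<open>(a, b)\<close> when \<open>\<rho> \<noteq> 0\<close>.

  With the integrating factors \<open>\<kappa> = x \<zeta> / 2\<close> and \<open>E = exp (\<integral> \<rho>)\<close>, the function
  \<open>Q = \<kappa> E (U0 - u)\<close> vanishes at \<open>a\<close> and \<open>b\<close>, and \<open>Q' = E \<kappa> \<zeta> (m U0 + \<lambda> - l0)\<close>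
  with \<open>m = \<rho>/\<zeta>\<close> non-decreasing. Once \<open>\<lambda> \<ge> l0\<close>, the factor \<open>m U0 + \<lambda> - l0\<close> changes
  sign at most once, from \<open>+\<close> to \<open>-\<close>, hence \<open>Q \<ge> 0\<close>. The inequality \<open>\<lambda> \<ge> l0\<close> (strict
  when \<open>\<rho> \<noteq> 0\<close>) comes from comparing the first integral \<open>\<kappa> E u + \<lambda> \<integral> E \<kappa> \<zeta>\<close> of the
  equation with the same expression for \<open>U0\<close> and \<open>l0\<close>: at \<open>b\<close> they differ by a positive
  multiple of \<open>\<lambda> - l0\<close>, and the difference is also the integral of a non-decreasing weight
  times \<open>U0/x\<close>, a function that changes sign once, at \<open>\<surd>(ab)\<close>, and has integral zero.

  Since \<open>u\<close> is only Lipschitz and \<open>\<rho>\<close> only monotone, all these functions are differentiable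
  merely almost everywhere; monotonicity is recovered from the a.e. sign of the derivative
  through the fact that pointwise Lipschitz functions map null sets to null sets.
\<close>

section \<open>Pointwise Lipschitz functions\<close>

definition pointwise_lipschitz_on :: "real set \<Rightarrow> (real \<Rightarrow> real) \<Rightarrow> bool" where
  "pointwise_lipschitz_on S f \<longleftrightarrow>
     (\<forall>x\<in>S. \<exists>B>0. \<forall>\<^sub>F y in at x within S. \<bar>f y - f x\<bar> \<le> B * \<bar>y - x\<bar>)"

lemma pointwise_lipschitz_onI:
  assumes "\<And>x. x \<in> S \<Longrightarrow> \<exists>B>0. \<forall>\<^sub>F y in at x within S. \<bar>f y - f x\<bar> \<le> B * \<bar>y - x\<bar>"
  shows "pointwise_lipschitz_on S f"
  using assms unfolding pointwise_lipschitz_on_def by blast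

lemma pointwise_lipschitz_onE:
  assumes "pointwise_lipschitz_on S f" "x \<in> S"
  obtains B where "B > 0" "\<forall>\<^sub>F y in at x within S. \<bar>f y - f x\<bar> \<le> B * \<bar>y - x\<bar>"
  using assms unfolding pointwise_lipschitz_on_def by blast

lemma pointwise_lipschitz_on_subset:
  "pointwise_lipschitz_on T f \<Longrightarrow> S \<subseteq> T \<Longrightarrow> pointwise_lipschitz_on S f"
  unfolding pointwise_lipschitz_on_def using filter_leD[OF at_le] by blast

lemma lipschitz_on_imp_pointwise_lipschitz_on:
  assumes "L-lipschitz_on S f"
  shows "pointwise_lipschitz_on S f"
proof (rule pointwise_lipschitz_onI)
  fix x assume "x \<in> S"
  have "\<forall>y\<in>S. \<bar>f y - f x\<bar> \<le> (L + 1) * \<bar>y - x\<bar>"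
  proof
    fix y assume "y \<in> S"
    with \<open>x \<in> S\<close> have "\<bar>f y - f x\<bar> \<le> L * \<bar>y - x\<bar>"
      using lipschitz_onD[OF assms] by (simp add: dist_real_def)
    also have "\<dots> \<le> (L + 1) * \<bar>y - x\<bar>"
      by (simp add: mult_right_mono)
    finally show "\<bar>f y - f x\<bar> \<le> (L + 1) * \<bar>y - x\<bar>" .
  qed
  moreover have "L + 1 > 0" using lipschitz_on_nonneg[OF assms] by simp
  ultimately show "\<exists>B>0. \<forall>\<^sub>F y in at x within S. \<bar>f y - f x\<bar> \<le> B * \<bar>y - x\<bar>"
    by (auto simp: eventually_at_filter intro!: exI[of _ "L + 1"] always_eventually)
qed

lemma has_real_derivative_imp_lipschitz_at:
  assumes "(f has_real_derivative d) (at x within S)"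
  shows "\<forall>\<^sub>F y in at x within S. \<bar>f y - f x\<bar> \<le> (\<bar>d\<bar> + 1) * \<bar>y - x\<bar>"
proof -
  have "((\<lambda>y. (f y - f x) / (y - x)) \<longlongrightarrow> d) (at x within S)"
    using assms by (simp add: has_field_derivative_iff)
  then have "\<forall>\<^sub>F y in at x within S. dist ((f y - f x) / (y - x)) d < 1"
    by (rule tendstoD) simp
  moreover have "\<forall>\<^sub>F y in at x within S. y \<noteq> x"
    by (simp add: eventually_at_filter)
  ultimately show ?thesis
  proof eventually_elim
    case (elim y)
    then have "\<bar>(f y - f x) / (y - x)\<bar> \<le> \<bar>d\<bar> + 1"
      unfolding dist_real_def by arith
    moreover have "\<bar>y - x\<bar> > 0"
      using elim by simp
    ultimately show ?case
      by (simp add: abs_divide pos_divide_le_eq)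
  qed
qed

lemma has_real_derivative_imp_pointwise_lipschitz_on:
  assumes "\<And>x. x \<in> S \<Longrightarrow> \<exists>d. (f has_real_derivative d) (at x within S)"
  shows "pointwise_lipschitz_on S f"
proof (rule pointwise_lipschitz_onI)
  fix x assume "x \<in> S"
  then obtain d where "(f has_real_derivative d) (at x within S)"
    using assms by blast
  then show "\<exists>B>0. \<forall>\<^sub>F y in at x within S. \<bar>f y - f x\<bar> \<le> B * \<bar>y - x\<bar>"
    by (intro exI[of _ "\<bar>d\<bar> + 1"]) (simp add: has_real_derivative_imp_lipschitz_at add_nonneg_pos)
qed

lemma pointwise_lipschitz_on_const: "pointwise_lipschitz_on S (\<lambda>y. c)"
  by (rule pointwise_lipschitz_onI) (auto intro!: exI[of _ 1])

lemma pointwise_lipschitz_on_add: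
  assumes f: "pointwise_lipschitz_on S f" and g: "pointwise_lipschitz_on S g"
  shows "pointwise_lipschitz_on S (\<lambda>y. f y + g y)"
proof (rule pointwise_lipschitz_onI)
  fix x assume x: "x \<in> S"
  obtain B1 where "B1 > 0" and B1: "\<forall>\<^sub>F y in at x within S. \<bar>f y - f x\<bar> \<le> B1 * \<bar>y - x\<bar>"
    using f x by (rule pointwise_lipschitz_onE)
  obtain B2 where "B2 > 0" and B2: "\<forall>\<^sub>F y in at x within S. \<bar>g y - g x\<bar> \<le> B2 * \<bar>y - x\<bar>"
    using g x by (rule pointwise_lipschitz_onE)
  have "\<forall>\<^sub>F y in at x within S. \<bar>f y + g y - (f x + g x)\<bar> \<le> (B1 + B2) * \<bar>y - x\<bar>"
    using B1 B2 by eventually_elim (simp add: distrib_right abs_triangle_ineq4)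
  then show "\<exists>B>0. \<forall>\<^sub>F y in at x within S. \<bar>f y + g y - (f x + g x)\<bar> \<le> B * \<bar>y - x\<bar>"
    using \<open>B1 > 0\<close> \<open>B2 > 0\<close> by (intro exI[of _ "B1 + B2"]) simp
qed

lemma pointwise_lipschitz_on_mult:
  assumes f: "pointwise_lipschitz_on S f" and g: "pointwise_lipschitz_on S g"
  shows "pointwise_lipschitz_on S (\<lambda>y. f y * g y)"
proof (rule pointwise_lipschitz_onI)
  fix x assume x: "x \<in> S"
  obtain B1 where "B1 > 0" and B1: "\<forall>\<^sub>F y in at x within S. \<bar>f y - f x\<bar> \<le> B1 * \<bar>y - x\<bar>"
    using f x by (rule pointwise_lipschitz_onE)
  obtain B2 where "B2 > 0" and B2: "\<forall>\<^sub>F y in at x within S. \<bar>g y - g x\<bar> \<le> B2 * \<bar>y - x\<bar>"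
    using g x by (rule pointwise_lipschitz_onE)
  define B where "B = (\<bar>f x\<bar> + B1) * B2 + \<bar>g x\<bar> * B1 + 1"
  have near: "\<forall>\<^sub>F y in at x within S. \<bar>y - x\<bar> < 1"
    unfolding eventually_at by (auto intro!: exI[of _ 1] simp: dist_real_def)
  have "\<forall>\<^sub>F y in at x within S. \<bar>f y * g y - f x * g x\<bar> \<le> B * \<bar>y - x\<bar>"
    using B1 B2 near
  proof eventually_elim
    case (elim y)
    have "B1 * \<bar>y - x\<bar> \<le> B1"
      using elim(3) \<open>B1 > 0\<close> by (simp add: mult_left_le)
    with elim(1) have fy: "\<bar>f y\<bar> \<le> \<bar>f x\<bar> + B1"
      by arith
    have "f y * g y - f x * g x = f y * (g y - g x) + g x * (f y - f x)"
      by (simp add: algebra_simps)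
    then have "\<bar>f y * g y - f x * g x\<bar> \<le> \<bar>f y\<bar> * \<bar>g y - g x\<bar> + \<bar>g x\<bar> * \<bar>f y - f x\<bar>"
      by (metis abs_mult abs_triangle_ineq)
    also have "\<dots> \<le> (\<bar>f x\<bar> + B1) * (B2 * \<bar>y - x\<bar>) + \<bar>g x\<bar> * (B1 * \<bar>y - x\<bar>)"
      using elim fy by (intro add_mono mult_mono mult_left_mono) auto
    also have "\<dots> \<le> B * \<bar>y - x\<bar>"
      by (simp add: B_def algebra_simps)
    finally show ?case .
  qed
  moreover have "B > 0"
    using \<open>B1 > 0\<close> \<open>B2 > 0\<close> by (simp add: B_def add_nonneg_pos)
  ultimately show "\<exists>B>0. \<forall>\<^sub>F y in at x within S. \<bar>f y * g y - f x * g x\<bar> \<le> B * \<bar>y - x\<bar>"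
    by blast
qed

lemma pointwise_lipschitz_on_cmult:
  "pointwise_lipschitz_on S f \<Longrightarrow> pointwise_lipschitz_on S (\<lambda>y. c * f y)"
  by (rule pointwise_lipschitz_on_mult[OF pointwise_lipschitz_on_const])

lemma pointwise_lipschitz_on_diff:
  assumes "pointwise_lipschitz_on S f" "pointwise_lipschitz_on S g"
  shows "pointwise_lipschitz_on S (\<lambda>y. f y - g y)"
  using pointwise_lipschitz_on_add[OF assms(1) pointwise_lipschitz_on_cmult[OF assms(2), of "-1"]]
  by simp

lemma pointwise_lipschitz_on_imp_continuous_on:
  assumes "pointwise_lipschitz_on S f"
  shows "continuous_on S f"
  unfolding continuous_on_eq_continuous_within
proof
  fix x assume "x \<in> S"
  with assms obtain B where "B > 0" and B: "\<forall>\<^sub>F y in at x within S. \<bar>f y - f x\<bar> \<le> B * \<bar>y - x\<bar>"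
    by (rule pointwise_lipschitz_onE)
  from B have bound: "\<forall>\<^sub>F y in at x within S. norm (f y - f x) \<le> B * \<bar>y - x\<bar>"
    by (rule eventually_mono) (simp only: real_norm_def)
  have "((\<lambda>y. B * \<bar>y - x\<bar>) \<longlongrightarrow> 0) (at x within S)"
    by (rule tendsto_mult_right_zero[OF tendsto_rabs_zero[OF LIM_zero[OF tendsto_ident_at]]])
  with bound have "((\<lambda>y. f y - f x) \<longlongrightarrow> 0) (at x within S)"
    by (rule Lim_null_comparison[of "\<lambda>y. f y - f x" "\<lambda>y. B * \<bar>y - x\<bar>"])
  then show "continuous (at x within S) f"
    unfolding continuous_within by (rule LIM_zero_cancel)
qed

lemma pointwise_lipschitz_on_compose:
  assumes f: "pointwise_lipschitz_on S f"
    and h: "\<And>x. x \<in> S \<Longrightarrow> \<exists>d. (h has_real_derivative d) (at (f x))"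
  shows "pointwise_lipschitz_on S (\<lambda>y. h (f y))"
proof (rule pointwise_lipschitz_onI)
  fix x assume x: "x \<in> S"
  obtain B where "B > 0" and B: "\<forall>\<^sub>F y in at x within S. \<bar>f y - f x\<bar> \<le> B * \<bar>y - x\<bar>"
    using f x by (rule pointwise_lipschitz_onE)
  obtain d where "(h has_real_derivative d) (at (f x))"
    using h x by blast
  then have "\<forall>\<^sub>F z in at (f x). \<bar>h z - h (f x)\<bar> \<le> (\<bar>d\<bar> + 1) * \<bar>z - f x\<bar>"
    by (rule has_real_derivative_imp_lipschitz_at)
  then have "\<forall>\<^sub>F z in nhds (f x). \<bar>h z - h (f x)\<bar> \<le> (\<bar>d\<bar> + 1) * \<bar>z - f x\<bar>"
    unfolding eventually_at_filter by (rule eventually_mono) auto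
  moreover have "filterlim f (nhds (f x)) (at x within S)"
    using pointwise_lipschitz_on_imp_continuous_on[OF f] x
    by (simp add: continuous_on_eq_continuous_within continuous_within)
  ultimately have "\<forall>\<^sub>F y in at x within S. \<bar>h (f y) - h (f x)\<bar> \<le> (\<bar>d\<bar> + 1) * \<bar>f y - f x\<bar>"
    by (rule eventually_compose_filterlim)
  with B have "\<forall>\<^sub>F y in at x within S. \<bar>h (f y) - h (f x)\<bar> \<le> ((\<bar>d\<bar> + 1) * B) * \<bar>y - x\<bar>"
  proof eventually_elim
    case (elim y)
    then have "(\<bar>d\<bar> + 1) * \<bar>f y - f x\<bar> \<le> (\<bar>d\<bar> + 1) * (B * \<bar>y - x\<bar>)"
      by (intro mult_left_mono) simp_all
    with elim show ?case
      by (simp add: mult.assoc)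
  qed
  then show "\<exists>B>0. \<forall>\<^sub>F y in at x within S. \<bar>h (f y) - h (f x)\<bar> \<le> B * \<bar>y - x\<bar>"
    using \<open>B > 0\<close> by (intro exI[of _ "(\<bar>d\<bar> + 1) * B"]) (simp add: add_nonneg_pos)
qed

lemma negligible_pointwise_lipschitz_image:
  assumes f: "pointwise_lipschitz_on S f" and N: "negligible N" "N \<subseteq> S"
  shows "negligible (f ` N)"
proof (rule negligible_locally_Lipschitz_image[OF order_refl N(1)])
  fix x assume "x \<in> N"
  then obtain B where B: "\<forall>\<^sub>F y in at x within S. \<bar>f y - f x\<bar> \<le> B * \<bar>y - x\<bar>"
    using f N(2) by (blast elim: pointwise_lipschitz_onE)
  then obtain T where "open T" "x \<in> T" and T: "\<And>y. y \<in> T \<Longrightarrow> y \<in> S \<Longrightarrow> y \<noteq> x \<Longrightarrow> \<bar>f y - f x\<bar> \<le> B * \<bar>y - x\<bar>"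
    unfolding eventually_at_topological by blast
  then show "\<exists>T B. open T \<and> x \<in> T \<and> (\<forall>y\<in>N \<inter> T. norm (f y - f x) \<le> B * norm (y - x))"
  proof (intro exI[of _ T] exI[of _ B] conjI ballI)
    fix y assume "y \<in> N \<inter> T"
    with N(2) T show "norm (f y - f x) \<le> B * norm (y - x)"
      by (cases "y = x") auto
  qed
qed

section \<open>Monotonicity from an almost everywhere derivative bound\<close>

lemma pointwise_lipschitz_mono_if_deriv_pos:
  fixes g :: "real \<Rightarrow> real"
  assumes "p \<le> q" and g: "pointwise_lipschitz_on {p..q} g" and N: "negligible N"
    and deriv: "\<And>x. x \<in> {p<..<q} - N \<Longrightarrow> \<exists>d>0. (g has_real_derivative d) (at x)"
  shows "g p \<le> g q"
proof (rule ccontr)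
  assume "\<not> g p \<le> g q"
  then have gqp: "g q < g p" by simp
  have cont: "continuous_on {p..q} g"
    using g by (rule pointwise_lipschitz_on_imp_continuous_on)
  have "negligible (g ` (N \<inter> {p..q}))"
    using g by (rule negligible_pointwise_lipschitz_image) (use N negligible_Int in auto)
  moreover have "\<not> negligible {g q<..<g p}"
    using gqp negligible_interval(2)[of "g q" "g p"] by simp
  ultimately have "\<not> {g q<..<g p} \<subseteq> g ` (N \<inter> {p..q})"
    using negligible_subset by blast
  then obtain y where y: "g q < y" "y < g p" "y \<notin> g ` (N \<inter> {p..q})"
    by (auto simp: subset_iff)
  \<comment> \<open>The last point \<open>s\<close> where \<open>g = y\<close> lies off \<open>N\<close>, so \<open>g' s > 0\<close>, yet \<open>g < y\<close> right of \<open>s\<close>.\<close>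
  define Z where "Z = {p..q} \<inter> g -` {y}"
  have "compact Z"
    unfolding Z_def compact_eq_bounded_closed
    using continuous_closed_preimage[OF cont] by (simp add: bounded_Int)
  obtain x0 where "p \<le> x0" "x0 \<le> q" "g x0 = y"
    using IVT2'[of g q y p] y \<open>p \<le> q\<close> cont by auto
  then have "Z \<noteq> {}"
    by (auto simp: Z_def)
  with compact_attains_sup[OF \<open>compact Z\<close>] obtain s
    where "s \<in> Z" and s_max: "\<And>z. z \<in> Z \<Longrightarrow> z \<le> s"
    by blast
  then have s: "p \<le> s" "s \<le> q" "g s = y"
    by (auto simp: Z_def)
  have below: "g x < y" if "s < x" and "x \<le> q" for x
  proof (rule ccontr)
    assume "\<not> g x < y"
    moreover have "continuous_on {x..q} g"
      using cont by (rule continuous_on_subset) (use s that in auto)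
    ultimately obtain z where "x \<le> z" "z \<le> q" "g z = y"
      using IVT2'[of g q y x] y \<open>x \<le> q\<close> by auto
    then have "z \<in> Z"
      using s that by (auto simp: Z_def)
    with s_max \<open>s < x\<close> \<open>x \<le> z\<close> show False
      by fastforce
  qed
  have "s \<noteq> p" "s \<noteq> q"
    using s y by auto
  moreover have "s \<notin> N"
    using s y by auto
  ultimately have "s \<in> {p<..<q} - N"
    using s by simp
  then obtain d where "d > 0" "(g has_real_derivative d) (at s)"
    using deriv by blast
  then obtain \<delta> where "\<delta> > 0" and inc: "\<And>h. 0 < h \<Longrightarrow> h < \<delta> \<Longrightarrow> g s < g (s + h)"
    using DERIV_pos_inc_right by blast
  define h where "h = min (\<delta> / 2) (q - s)"
  have "0 < h" "h < \<delta>" "s + h \<le> q"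
    using \<open>\<delta> > 0\<close> s \<open>s \<noteq> q\<close> by (auto simp: h_def)
  then show False
    using inc[of h] below[of "s + h"] s(3) by linarith
qed

lemma pointwise_lipschitz_increment_ge:
  fixes f :: "real \<Rightarrow> real"
  assumes "p \<le> q" and f: "pointwise_lipschitz_on {p..q} f"
    and ae: "AE x in lborel. x \<in> {p<..<q} \<longrightarrow> (\<exists>d\<ge>c. (f has_real_derivative d) (at x))"
  shows "c * (q - p) \<le> f q - f p"
proof (cases "p = q")
  case False
  with \<open>p \<le> q\<close> have "p < q" by simp
  obtain N where N: "{x \<in> space lborel. \<not> (x \<in> {p<..<q} \<longrightarrow> (\<exists>d\<ge>c. (f has_real_derivative d) (at x)))} \<subseteq> N"
    "emeasure lborel N = 0" "N \<in> sets lborel"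
    using ae by (rule AE_E)
  then have "negligible N"
    by (simp add: negligible_iff_null_sets null_sets_completionI null_sets_def)
  have deriv: "\<exists>d\<ge>c. (f has_real_derivative d) (at x)" if "x \<in> {p<..<q} - N" for x
    using N(1) that by auto
  show ?thesis
  proof (rule field_le_epsilon)
    fix e :: real assume "e > 0"
    define k where "k = c - e / (q - p)"
    have "(\<lambda>x. f x - k * x) p \<le> (\<lambda>x. f x - k * x) q"
    proof (rule pointwise_lipschitz_mono_if_deriv_pos[OF \<open>p \<le> q\<close> _ \<open>negligible N\<close>])
      show "pointwise_lipschitz_on {p..q} (\<lambda>x. f x - k * x)"
        by (intro pointwise_lipschitz_on_diff f has_real_derivative_imp_pointwise_lipschitz_on)
          (auto intro!: derivative_eq_intros)
      fix x assume "x \<in> {p<..<q} - N"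
      then obtain d where "d \<ge> c" "(f has_real_derivative d) (at x)"
        using deriv by blast
      moreover have "e / (q - p) > 0"
        using \<open>e > 0\<close> \<open>p < q\<close> by simp
      ultimately show "\<exists>d>0. ((\<lambda>x. f x - k * x) has_real_derivative d) (at x)"
        by (intro exI[of _ "d - k"]) (auto intro!: derivative_eq_intros simp: k_def)
    qed
    moreover have "k * (q - p) = c * (q - p) - e"
      using \<open>p < q\<close> by (simp add: k_def left_diff_distrib)
    ultimately show "c * (q - p) \<le> f q - f p + e"
      by (simp add: algebra_simps)
  qed
qed simp

section \<open>The measure \<open>dx/x\<close> and the coefficients\<close>

lemma has_integral_inverse:
  fixes p q :: real
  assumes "0 < p" "p \<le> q"
  shows "((\<lambda>x. 1 / x) has_integral (ln q - ln p)) {p..q}"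
proof (rule fundamental_theorem_of_calculus[OF assms(2)])
  fix x assume "x \<in> {p..q}"
  with assms have "x > 0" by auto
  then show "(ln has_vector_derivative 1 / x) (at x within {p..q})"
    by (auto intro!: derivative_eq_intros simp: has_real_derivative_iff_has_vector_derivative[symmetric])
qed

lemma emeasure_mu_eq_nn_integral:
  assumes "A \<in> sets borel" "A \<subseteq> {0<..}"
  shows "emeasure mu A = (\<integral>\<^sup>+x. ennreal (1 / x) * indicator A x \<partial>lborel)"
proof -
  have "emeasure mu A = (\<integral>\<^sup>+x. ennreal (indicator {0<..} x / x) * indicator A x \<partial>lborel)"
    unfolding mu_def by (rule emeasure_density) (use assms in simp_all)
  also have "\<dots> = (\<integral>\<^sup>+x. ennreal (1 / x) * indicator A x \<partial>lborel)"
    by (rule nn_integral_cong) (use assms in \<open>auto simp: indicator_def\<close>)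
  finally show ?thesis .
qed

lemma emeasure_mu_Icc:
  assumes "0 < p" "p \<le> q"
  shows "emeasure mu {p..q} = ennreal (ln q - ln p)"
proof -
  have "emeasure mu {p..q} = (\<integral>\<^sup>+x. ennreal (1 / x) * indicator {p..q} x \<partial>lborel)"
    by (rule emeasure_mu_eq_nn_integral) (use assms in auto)
  also have "\<dots> = ennreal (ln q - ln p)"
    by (rule nn_integral_has_integral_lebesgue'[OF _ has_integral_inverse[OF assms]]) (use assms in auto)
  finally show ?thesis .
qed

lemma emeasure_mu_Ioo:
  assumes "0 < p" "p \<le> q"
  shows "emeasure mu {p<..<q} = ennreal (ln q - ln p)"
proof -
  have "emeasure mu {p<..<q} = (\<integral>\<^sup>+x. ennreal (1 / x) * indicator {p<..<q} x \<partial>lborel)"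
    by (rule emeasure_mu_eq_nn_integral) (use assms in auto)
  also have "\<dots> = ennreal (ln q - ln p)"
  proof (rule nn_integral_has_integral_lebesgue')
    show "((\<lambda>x. 1 / x) has_integral (ln q - ln p)) {p<..<q}"
      using has_integral_inverse[OF assms] has_integral_open_interval[of "\<lambda>x. 1 / x" _ p q]
      by simp
  qed (use assms in auto)
  finally show ?thesis .
qed

lemma sets_mu: "sets mu = sets borel"
  by (simp add: mu_def)

lemma zeta_pos: "\<bar>x\<bar> < 1 \<Longrightarrow> zeta x > 0"
  by (simp add: zeta_def abs_square_less_1)

lemma zeta_mono: "0 \<le> x \<Longrightarrow> x \<le> y \<Longrightarrow> y < 1 \<Longrightarrow> zeta x \<le> zeta y"
  unfolding zeta_def by (intro divide_left_mono power_mono) (auto simp: abs_square_less_1 mult_pos_pos)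

lemma zeta_has_real_derivative:
  assumes "x\<^sup>2 \<noteq> 1"
  shows "(zeta has_real_derivative x * zeta x ^ 2) (at x)"
proof -
  have "1 - x\<^sup>2 \<noteq> 0" using assms by simp
  then show ?thesis
    unfolding zeta_def[abs_def]
    by (auto intro!: derivative_eq_intros simp: field_simps power2_eq_square)
qed

text \<open>An integrating factor of \<open>u' + (1/x + x \<zeta>) u\<close>.\<close>
definition kappa :: "real \<Rightarrow> real" where
  "kappa x = x * zeta x / 2"

lemma kappa_has_real_derivative:
  assumes "x \<noteq> 0" "x\<^sup>2 \<noteq> 1"
  shows "(kappa has_real_derivative kappa x * (1 / x + x * zeta x)) (at x)"
  unfolding kappa_def[abs_def]
  using assms by (auto intro!: derivative_eq_intros zeta_has_real_derivative simp: field_simps power2_eq_square)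

lemma kappa_mult_hyperbola:
  assumes "x \<noteq> 0" "x\<^sup>2 \<noteq> 1" "c \<noteq> 0"
  shows "kappa x * ((k / x - x) / c) = 1 / c - (1 - k) / c * zeta x / 2"
proof -
  define d where "d = 1 - x\<^sup>2"
  have "d \<noteq> 0" "x * x = 1 - d"
    using assms by (auto simp: d_def power2_eq_square)
  moreover have "zeta x = 2 / d"
    by (simp add: zeta_def d_def)
  ultimately show ?thesis
    using assms unfolding kappa_def by (simp add: field_simps) algebra
qed

definition w :: "real \<Rightarrow> real" where
  "w x = x * kappa x * zeta x"

lemma
  assumes "0 < x" "x < 1"
  shows kappa_pos: "kappa x > 0" and w_pos: "w x > 0"
  using assms zeta_pos[of x] by (simp_all add: kappa_def w_def)

lemma kappa_zeta_mono:
  assumes "0 \<le> x" "x \<le> y" "y < 1"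
  shows "kappa x * zeta x \<le> kappa y * zeta y"
proof -
  have "0 \<le> zeta x" "zeta x \<le> zeta y"
    using assms zeta_pos[of x] zeta_mono[of x y] by auto
  with assms have "x * (zeta x * zeta x) \<le> y * (zeta y * zeta y)"
    by (intro mult_mono) auto
  then show ?thesis
    by (simp add: kappa_def algebra_simps)
qed

lemma w_strict_mono:
  assumes "0 \<le> x" "x < y" "y < 1"
  shows "w x < w y"
proof -
  have "0 < zeta x" "zeta x \<le> zeta y"
    using assms zeta_pos[of x] zeta_mono[of x y] by auto
  then have "x * x * (zeta x * zeta x) < y * y * (zeta y * zeta y)"
    using assms by (intro mult_less_le_imp_less mult_strict_mono mult_mono) auto
  then show ?thesis
    by (simp add: w_def kappa_def algebra_simps)
qed

lemma w_mono: "0 \<le> x \<Longrightarrow> x \<le> y \<Longrightarrow> y < 1 \<Longrightarrow> w x \<le> w y"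
  using w_strict_mono[of x y] by (cases "x = y") auto

section \<open>Comparison with the solution for \<open>\<rho> = 0\<close>\<close>

locale ode_setting =
  fixes a b lam L :: real and \<rho> u :: "real \<Rightarrow> real"
  assumes ab: "0 < a" "a < b" "b < 1"
    and rho_nonneg: "\<forall>x\<in>{a..b}. \<rho> x \<ge> 0"
    and rho_zeta_mono: "mono_on {a..b} (\<lambda>x. \<rho> x / zeta x)"
    and u_lip: "L-lipschitz_on {a..b} u"
    and ode: "AE x in lborel. x \<in> {a<..<b} \<longrightarrow>
       (u has_real_derivative (- ((1 / x + rho_tilde \<rho> x) * u x + lam * zeta x))) (at x)"
    and ua: "u a = 1" and ub: "u b = -1"
begin

lemma in_unit_interval:
  assumes "x \<in> {a..b}"
  shows "0 < x" "x < 1" "x\<^sup>2 < 1"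
  using assms ab by (auto simp: abs_square_less_1)

lemma zeta_pos_on: "x \<in> {a..b} \<Longrightarrow> zeta x > 0"
  using in_unit_interval[of x] by (intro zeta_pos) simp

lemma zeta_mono_on: "x \<in> {a..b} \<Longrightarrow> y \<in> {a..b} \<Longrightarrow> x \<le> y \<Longrightarrow> zeta x \<le> zeta y"
  using in_unit_interval[of x] in_unit_interval[of y] by (intro zeta_mono) simp_all

definition m :: "real \<Rightarrow> real" where
  "m x = \<rho> x / zeta x"

lemma m_nonneg: "x \<in> {a..b} \<Longrightarrow> 0 \<le> m x"
  using rho_nonneg zeta_pos_on[of x] by (simp add: m_def)

lemma m_mono: "x \<in> {a..b} \<Longrightarrow> y \<in> {a..b} \<Longrightarrow> x \<le> y \<Longrightarrow> m x \<le> m y"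
  using rho_zeta_mono unfolding m_def mono_on_def by blast

lemma rho_eq_m_zeta: "x \<in> {a..b} \<Longrightarrow> \<rho> x = m x * zeta x"
  using zeta_pos_on[of x] by (simp add: m_def)

lemma rho_mono_on: "mono_on {a..b} \<rho>"
proof (rule mono_onI)
  fix x y assume xy: "x \<in> {a..b}" "y \<in> {a..b}" "x \<le> y"
  then have "m x * zeta x \<le> m y * zeta y"
    using m_mono m_nonneg zeta_pos_on zeta_mono_on by (intro mult_mono) (auto intro: less_imp_le)
  with xy show "\<rho> x \<le> \<rho> y"
    by (simp add: rho_eq_m_zeta)
qed

lemma rho_integrable:
  assumes "a \<le> x" "y \<le> b"
  shows "\<rho> integrable_on {x..y}"
  using integrable_on_mono_on[OF rho_mono_on] by (rule integrable_subinterval_real) (use assms in auto)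

definition rho_prim :: "real \<Rightarrow> real" where
  "rho_prim x = integral {a..x} \<rho>"

lemma rho_prim_increment:
  assumes "a \<le> x" "x \<le> y" "y \<le> b"
  shows "0 \<le> rho_prim y - rho_prim x" "rho_prim y - rho_prim x \<le> \<rho> b * (y - x)"
proof -
  have int: "\<rho> integrable_on {x..y}"
    using rho_integrable assms by simp
  have "rho_prim y - rho_prim x = integral {x..y} \<rho>"
    using Henstock_Kurzweil_Integration.integral_combine[where f = \<rho> and a = a and c = x and b = y]
      rho_integrable[of a y] assms
    by (simp add: rho_prim_def)
  moreover have "0 \<le> integral {x..y} \<rho>"
    by (rule integral_nonneg[OF int]) (use rho_nonneg assms in auto)
  moreover have "integral {x..y} \<rho> \<le> integral {x..y} (\<lambda>t. \<rho> b)"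
    by (rule integral_le[OF int]) (use rho_mono_on assms in \<open>auto simp: mono_on_def\<close>)
  ultimately show "0 \<le> rho_prim y - rho_prim x" "rho_prim y - rho_prim x \<le> \<rho> b * (y - x)"
    using assms by (simp_all add: mult.commute)
qed

lemma rho_prim_lipschitz: "(\<rho> b)-lipschitz_on {a..b} rho_prim"
proof (rule lipschitz_onI)
  show "0 \<le> \<rho> b"
    using rho_nonneg ab by simp
  fix x y assume "x \<in> {a..b}" "y \<in> {a..b}"
  then show "dist (rho_prim x) (rho_prim y) \<le> \<rho> b * dist x y"
    using rho_prim_increment[of x y] rho_prim_increment[of y x]
    by (cases "x \<le> y") (auto simp: dist_real_def)
qed

definition E :: "real \<Rightarrow> real" where
  "E x = exp (rho_prim x)"

lemma E_a: "E a = 1"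
  by (simp add: E_def rho_prim_def)

lemma E_ge_1: "x \<in> {a..b} \<Longrightarrow> 1 \<le> E x"
  using rho_prim_increment(1)[of a x] by (simp add: E_def rho_prim_def)

lemma E_pos: "0 < E x"
  by (simp add: E_def)

lemma E_mono: "x \<in> {a..b} \<Longrightarrow> y \<in> {a..b} \<Longrightarrow> x \<le> y \<Longrightarrow> E x \<le> E y"
  using rho_prim_increment(1)[of x y] by (simp add: E_def)

lemma pointwise_lipschitz_E: "pointwise_lipschitz_on {a..b} E"
  unfolding E_def[abs_def]
  by (rule pointwise_lipschitz_on_compose[OF lipschitz_on_imp_pointwise_lipschitz_on[OF rho_prim_lipschitz]])
    (auto intro: DERIV_exp)

text \<open>The points where \<open>\<rho>\<close> jumps; there are countably many because \<open>\<rho>\<close> is monotone.\<close>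
definition C :: "real set" where
  "C = {x \<in> {a..b}. \<not> continuous (at x within {a..b}) \<rho>}"

lemma countable_C: "countable C"
  unfolding C_def by (rule mono_on_ctble_discont[OF rho_mono_on])

lemma E_has_real_derivative:
  assumes "x \<in> {a<..<b} - C"
  shows "(E has_real_derivative \<rho> x * E x) (at x)"
proof -
  have "continuous (at x within {a..b}) \<rho>"
    using assms by (auto simp: C_def)
  then have "(rho_prim has_vector_derivative \<rho> x) (at x within {a..b} - {})"
    unfolding rho_prim_def[abs_def]
    by (intro integral_has_vector_derivative_continuous_at[OF integrable_on_mono_on[OF rho_mono_on]])
      (use assms in auto)
  then have "(rho_prim has_real_derivative \<rho> x) (at x within {a..b})"
    by (simp add: has_real_derivative_iff_has_vector_derivative)
  then have "(rho_prim has_real_derivative \<rho> x) (at x)"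
    using at_within_Icc_at[of a x b] assms by simp
  then show ?thesis
    unfolding E_def[abs_def] by (auto intro!: derivative_eq_intros)
qed

definition J :: "real \<Rightarrow> real" where
  "J x = integral {a..x} (\<lambda>t. E t * kappa t * zeta t)"

lemma J_a: "J a = 0"
  by (simp add: J_def)

lemma J_has_real_derivative_within:
  assumes "x \<in> {a..b}"
  shows "(J has_real_derivative E x * kappa x * zeta x) (at x within {a..b})"
proof -
  have "continuous_on {a..b} E"
    using pointwise_lipschitz_E by (rule pointwise_lipschitz_on_imp_continuous_on)
  moreover have "continuous_on {a..b} (\<lambda>t. kappa t * zeta t)"
    unfolding kappa_def[abs_def] zeta_def[abs_def]
    by (intro continuous_intros) (auto dest: in_unit_interval(3))
  ultimately have "continuous_on {a..b} (\<lambda>t. E t * kappa t * zeta t)"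
    by (simp add: continuous_on_mult mult.assoc)
  then show ?thesis
    unfolding J_def[abs_def] using assms by (rule integral_has_real_derivative)
qed

lemma J_has_real_derivative: "x \<in> {a<..<b} \<Longrightarrow> (J has_real_derivative E x * kappa x * zeta x) (at x)"
  using J_has_real_derivative_within[of x] at_within_Icc_at[of a x b] by auto

definition U0 :: "real \<Rightarrow> real" where
  "U0 x = (a * b / x - x) / (b - a)"

definition l0 :: real where
  "l0 = (1 - a * b) / (b - a)"

lemma U0_a: "U0 a = 1"
  using ab by (simp add: U0_def)

lemma U0_b: "U0 b = -1"
  using ab by (simp add: U0_def divide_eq_minus_1_iff)

lemma U0_strict_antimono:
  assumes "0 < x" "x < y"
  shows "U0 y < U0 x"
proof -
  have "a * b / y < a * b / x"
    using assms ab by (intro frac_less2) auto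
  with assms have "a * b / y - y < a * b / x - x"
    by simp
  with ab show ?thesis
    unfolding U0_def by (intro divide_strict_right_mono) auto
qed

lemma U0_antimono: "0 < x \<Longrightarrow> x \<le> y \<Longrightarrow> U0 y \<le> U0 x"
  using U0_strict_antimono[of x y] by (cases "x = y") auto

lemma U0_reflect:
  assumes "0 < x"
  shows "U0 (a * b / x) = - U0 x"
proof -
  have "a * b / (a * b / x) = x"
    using assms ab by simp
  then show ?thesis
    by (simp add: U0_def minus_divide_left)
qed

definition x1 :: real where
  "x1 = sqrt (a * b)"

lemma x1: "a < x1" "x1 < b" "U0 x1 = 0"
proof -
  have "sqrt (a * a) < sqrt (a * b)" "sqrt (a * b) < sqrt (b * b)"
    using ab by (simp_all only: real_sqrt_less_iff) auto
  then show "a < x1" "x1 < b"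
    using ab by (simp_all add: x1_def)
  have "x1 * x1 = a * b"
    using ab by (simp add: x1_def)
  with \<open>a < x1\<close> ab show "U0 x1 = 0"
    by (simp add: U0_def field_simps)
qed

lemma U0_nonneg: "0 < x \<Longrightarrow> x \<le> x1 \<Longrightarrow> 0 \<le> U0 x"
  using U0_antimono[of x x1] x1 by simp

lemma U0_neg: "x1 < x \<Longrightarrow> U0 x < 0"
  using U0_strict_antimono[of x1 x] x1 ab by simp

lemma kappa_U0:
  assumes "x \<noteq> 0" "x\<^sup>2 \<noteq> 1"
  shows "kappa x * U0 x = 1 / (b - a) - l0 * zeta x / 2"
proof -
  have "kappa x * U0 x = 1 / (b - a) - (1 - a * b) / (b - a) * zeta x / 2"
    unfolding U0_def by (rule kappa_mult_hyperbola) (use assms ab in auto)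
  then show ?thesis
    by (simp add: l0_def)
qed

lemma kappa_U0_has_real_derivative:
  assumes "x \<in> {a<..<b}"
  shows "((\<lambda>x. kappa x * U0 x) has_real_derivative - l0 * (kappa x * zeta x)) (at x)"
proof (rule has_field_derivative_transform_within_open)
  have "x\<^sup>2 \<noteq> 1"
    using assms in_unit_interval(3)[of x] by simp
  then show "((\<lambda>x. 1 / (b - a) - l0 * zeta x / 2) has_real_derivative - l0 * (kappa x * zeta x)) (at x)"
    by (auto intro!: derivative_eq_intros zeta_has_real_derivative simp: kappa_def power2_eq_square)
  show "open {a<..<b}" "x \<in> {a<..<b}"
    using assms by auto
  fix y assume "y \<in> {a<..<b}"
  then show "1 / (b - a) - l0 * zeta y / 2 = kappa y * U0 y"
    using in_unit_interval[of y] by (simp add: kappa_U0)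
qed

definition V :: "real \<Rightarrow> real" where
  "V x = - (a * b / x + x) / (b - a)"

lemma V_ab: "V a = V b"
  using ab by (simp add: V_def add.commute)

lemma V_has_real_derivative:
  assumes "x \<noteq> 0"
  shows "(V has_real_derivative U0 x / x) (at x)"
proof -
  have "((\<lambda>x. - (a * b / x + x)) has_real_derivative (a * b / x - x) / x) (at x)"
    using assms by (auto intro!: derivative_eq_intros simp: field_simps power2_eq_square)
  from DERIV_cdivide[OF this, of "b - a"] show ?thesis
    unfolding V_def[abs_def] U0_def by (simp add: divide_divide_eq_left mult.commute)
qed

definition regular :: "real \<Rightarrow> bool" where
  "regular x \<longleftrightarrow> x \<in> {a<..<b} - C \<and>
     (u has_real_derivative (- ((1 / x + rho_tilde \<rho> x) * u x + lam * zeta x))) (at x)"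

lemma AE_regular: "AE x in lborel. x \<in> {a<..<b} \<longrightarrow> regular x"
proof -
  have "AE x in lborel. x \<notin> C"
    by (rule AE_not_in[OF countable_imp_null_set_lborel[OF countable_C]])
  with ode show ?thesis
    by eventually_elim (auto simp: regular_def)
qed

lemma regularD:
  assumes "regular x"
  shows "x \<in> {a<..<b}" "x \<in> {a..b}" "x \<notin> C" "x \<noteq> 0" "x\<^sup>2 \<noteq> 1"
  using assms in_unit_interval[of x] by (auto simp: regular_def)

lemma pointwise_lipschitz_on_smooth:
  "(\<And>x. x \<in> {a..b} \<Longrightarrow> \<exists>d. (f has_real_derivative d) (at x)) \<Longrightarrow> pointwise_lipschitz_on {a..b} f"
  by (intro has_real_derivative_imp_pointwise_lipschitz_on) (auto intro: has_field_derivative_at_within)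

lemma pointwise_lipschitz_basic:
  "pointwise_lipschitz_on {a..b} u" "pointwise_lipschitz_on {a..b} E" "pointwise_lipschitz_on {a..b} J"
  "pointwise_lipschitz_on {a..b} kappa" "pointwise_lipschitz_on {a..b} U0" "pointwise_lipschitz_on {a..b} V"
proof -
  show "pointwise_lipschitz_on {a..b} u"
    using u_lip by (rule lipschitz_on_imp_pointwise_lipschitz_on)
  show "pointwise_lipschitz_on {a..b} E"
    by (rule pointwise_lipschitz_E)
  show "pointwise_lipschitz_on {a..b} J"
    using J_has_real_derivative_within by (blast intro: has_real_derivative_imp_pointwise_lipschitz_on)
  have nz: "x \<noteq> 0" "x\<^sup>2 \<noteq> 1" if "x \<in> {a..b}" for x
    using in_unit_interval[OF that] by auto
  show "pointwise_lipschitz_on {a..b} kappa"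
    by (rule pointwise_lipschitz_on_smooth) (use nz kappa_has_real_derivative in blast)
  show "pointwise_lipschitz_on {a..b} V"
    by (rule pointwise_lipschitz_on_smooth) (use nz V_has_real_derivative in blast)
  show "pointwise_lipschitz_on {a..b} U0"
    unfolding U0_def[abs_def]
    by (rule pointwise_lipschitz_on_smooth) (use nz ab in \<open>auto intro!: exI derivative_eq_intros\<close>)
qed

lemma increment_ge:
  assumes "a \<le> p" "p \<le> q" "q \<le> b" and f: "pointwise_lipschitz_on {a..b} f"
    and f': "\<And>x. regular x \<Longrightarrow> (f has_real_derivative f' x) (at x)"
    and bound: "\<And>x. x \<in> {p<..<q} \<Longrightarrow> regular x \<Longrightarrow> c \<le> f' x"
  shows "c * (q - p) \<le> f q - f p"
proof (rule pointwise_lipschitz_increment_ge)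
  show "p \<le> q" by fact
  show "pointwise_lipschitz_on {p..q} f"
    using f by (rule pointwise_lipschitz_on_subset) (use assms in auto)
  show "AE x in lborel. x \<in> {p<..<q} \<longrightarrow> (\<exists>d\<ge>c. (f has_real_derivative d) (at x))"
    using AE_regular
  proof eventually_elim
    case (elim x)
    show ?case
    proof
      assume x: "x \<in> {p<..<q}"
      with assms have "regular x"
        using elim by auto
      with x show "\<exists>d\<ge>c. (f has_real_derivative d) (at x)"
        using f' bound by blast
    qed
  qed
qed

text \<open>\<open>F\<close> is a first integral of the equation. \<open>G\<close> is the same expression for \<open>U0\<close> and
  \<open>l0\<close>; it is not constant because \<open>U0\<close> solves the equation for \<open>\<rho> = 0\<close>.\<close>
definition F :: "real \<Rightarrow> real" where
  "F x = kappa x * u x * E x + lam * J x"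

definition G :: "real \<Rightarrow> real" where
  "G x = kappa x * U0 x * E x + l0 * J x"

definition Q :: "real \<Rightarrow> real" where
  "Q x = kappa x * (U0 x - u x) * E x"

definition Q_rate :: "real \<Rightarrow> real" where
  "Q_rate x = m x * U0 x + (lam - l0)"

definition phi :: "real \<Rightarrow> real" where
  "phi x = m x * E x"

definition D :: "real \<Rightarrow> real" where
  "D x = phi x1 * w x1 * V x - G x"

lemma Q_eq: "Q x = G x - F x + (lam - l0) * J x"
  by (simp add: Q_def G_def F_def algebra_simps)

lemma pointwise_lipschitz_F_G_Q_D:
  "pointwise_lipschitz_on {a..b} F" "pointwise_lipschitz_on {a..b} G"
  "pointwise_lipschitz_on {a..b} Q" "pointwise_lipschitz_on {a..b} D"
  unfolding F_def[abs_def] G_def[abs_def] Q_def[abs_def] D_def[abs_def]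
  by (intro pointwise_lipschitz_on_add pointwise_lipschitz_on_diff pointwise_lipschitz_on_mult
      pointwise_lipschitz_on_const pointwise_lipschitz_basic)+

lemma F_has_real_derivative:
  assumes "regular x"
  shows "(F has_real_derivative 0) (at x)"
proof -
  note x = regularD[OF assms]
  have kd: "(kappa has_real_derivative kappa x * (1 / x + x * zeta x)) (at x)"
    using x by (intro kappa_has_real_derivative)
  have ud: "(u has_real_derivative - ((1 / x + rho_tilde \<rho> x) * u x + lam * zeta x)) (at x)"
    using assms by (simp add: regular_def)
  have "x \<in> {a<..<b} - C"
    using x by simp
  from DERIV_add[OF DERIV_mult[OF DERIV_mult[OF kd ud] E_has_real_derivative[OF this]]
      DERIV_cmult[OF J_has_real_derivative[OF x(1)], of lam]]
  show ?thesis
    unfolding F_def[abs_def] by (rule DERIV_cong) (simp add: rho_tilde_def algebra_simps)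
qed

lemma G_has_real_derivative:
  assumes "x \<in> {a<..<b} - C"
  shows "(G has_real_derivative phi x * (kappa x * zeta x) * U0 x) (at x)"
proof -
  have "\<rho> x = m x * zeta x"
    using assms by (intro rho_eq_m_zeta) auto
  moreover from assms have "x \<in> {a<..<b}"
    by simp
  from DERIV_add[OF DERIV_mult[OF kappa_U0_has_real_derivative[OF this] E_has_real_derivative[OF assms]]
      DERIV_cmult[OF J_has_real_derivative[OF this], of l0]]
  have "(G has_real_derivative
      - l0 * (kappa x * zeta x) * E x + \<rho> x * E x * (kappa x * U0 x) + l0 * (E x * kappa x * zeta x)) (at x)"
    unfolding G_def[abs_def] by (simp add: mult.assoc)
  ultimately show ?thesis
    by (simp add: phi_def algebra_simps)
qed

lemma Q_has_real_derivative:
  assumes "regular x"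
  shows "(Q has_real_derivative E x * kappa x * zeta x * Q_rate x) (at x)"
proof -
  note x = regularD[OF assms]
  have "((\<lambda>x. G x - F x + (lam - l0) * J x) has_real_derivative
      phi x * (kappa x * zeta x) * U0 x - 0 + (lam - l0) * (E x * kappa x * zeta x)) (at x)"
    by (intro DERIV_add DERIV_diff DERIV_cmult G_has_real_derivative F_has_real_derivative
        J_has_real_derivative assms) (use x in auto)
  then show ?thesis
    unfolding Q_eq[abs_def] by (simp add: phi_def Q_rate_def algebra_simps)
qed

lemma D_has_real_derivative:
  assumes "x \<in> {a<..<b} - C"
  shows "(D has_real_derivative (phi x1 * w x1 - phi x * w x) * (U0 x / x)) (at x)"
proof -
  have "x \<noteq> 0"
    using assms ab by auto
  have "(D has_real_derivative phi x1 * w x1 * (U0 x / x) - phi x * (kappa x * zeta x) * U0 x) (at x)"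
    unfolding D_def[abs_def]
    by (intro DERIV_diff DERIV_cmult V_has_real_derivative G_has_real_derivative assms \<open>x \<noteq> 0\<close>)
  moreover have "phi x * (kappa x * zeta x) * U0 x = phi x * w x * (U0 x / x)"
    using \<open>x \<noteq> 0\<close> by (simp add: w_def)
  ultimately show ?thesis
    by (simp add: algebra_simps)
qed

lemma E_kappa_zeta_ge: "x \<in> {a..b} \<Longrightarrow> kappa a * zeta a \<le> E x * kappa x * zeta x"
proof -
  assume x: "x \<in> {a..b}"
  then have "kappa a * zeta a \<le> kappa x * zeta x"
    using ab in_unit_interval[of x] by (intro kappa_zeta_mono) auto
  also have "\<dots> \<le> E x * (kappa x * zeta x)"
    using E_ge_1[OF x] kappa_pos[of x] zeta_pos_on[OF x] in_unit_interval[OF x] by simp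
  finally show ?thesis
    by (simp add: mult.assoc)
qed

lemma kappa_zeta_a_pos: "0 < kappa a * zeta a"
  using kappa_pos[of a] zeta_pos[of a] ab by simp

lemma F_boundary: "lam * J b = kappa a + kappa b * E b"
proof -
  have "0 * (b - a) \<le> F b - F a"
    by (rule increment_ge[OF _ _ _ pointwise_lipschitz_F_G_Q_D(1) F_has_real_derivative]) (use ab in auto)
  moreover have "0 * (b - a) \<le> (0 - F b) - (0 - F a)"
    by (rule increment_ge[OF _ _ _
          pointwise_lipschitz_on_diff[OF pointwise_lipschitz_on_const pointwise_lipschitz_F_G_Q_D(1)]
          DERIV_diff[OF DERIV_const F_has_real_derivative]])
      (use ab in auto)
  ultimately have "F a = F b"
    by simp
  then show ?thesis
    using ua ub E_a J_a by (simp add: F_def)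
qed

lemma J_b_pos: "0 < J b"
proof -
  have "kappa a * zeta a * (b - a) \<le> J b - J a"
  proof (rule increment_ge[OF _ _ _ pointwise_lipschitz_basic(3)])
    show "a \<le> a" "a \<le> b" "b \<le> b"
      using ab by auto
    show "(J has_real_derivative E x * kappa x * zeta x) (at x)" if "regular x" for x
      using J_has_real_derivative regularD(1)[OF that] by blast
    show "kappa a * zeta a \<le> E x * kappa x * zeta x" if "x \<in> {a<..<b}" for x
      using E_kappa_zeta_ge that by simp
  qed
  moreover have "0 < kappa a * zeta a * (b - a)"
    using kappa_zeta_a_pos ab by simp
  ultimately show ?thesis
    using J_a by simp
qed

lemma D_boundary: "D b - D a = (lam - l0) * J b"
  using F_boundary V_ab U0_a U0_b E_a J_a by (simp add: D_def G_def algebra_simps)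

lemma phi_nonneg: "x \<in> {a..b} \<Longrightarrow> 0 \<le> phi x"
  using m_nonneg E_pos by (simp add: phi_def less_imp_le)

lemma phi_mono: "x \<in> {a..b} \<Longrightarrow> y \<in> {a..b} \<Longrightarrow> x \<le> y \<Longrightarrow> phi x \<le> phi y"
  unfolding phi_def using m_mono E_mono m_nonneg E_pos by (intro mult_mono) (auto intro: less_imp_le)

lemma w_mono_on: "x \<in> {a..b} \<Longrightarrow> y \<in> {a..b} \<Longrightarrow> x \<le> y \<Longrightarrow> w x \<le> w y"
  using in_unit_interval[of x] in_unit_interval[of y] by (intro w_mono) auto

lemma w_nonneg_on: "x \<in> {a..b} \<Longrightarrow> 0 \<le> w x"
  using w_pos in_unit_interval[of x] by (simp add: less_imp_le)

text \<open>The weight \<open>phi w\<close> is non-decreasing while \<open>U0 x / x\<close> changes sign from \<open>+\<close> to \<open>-\<close> at \<open>x1\<close>.\<close>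
lemma D_rate_nonneg:
  assumes x: "x \<in> {a..b}"
  shows "0 \<le> (phi x1 * w x1 - phi x * w x) * (U0 x / x)"
proof (cases "x \<le> x1")
  case True
  have "phi x * w x \<le> phi x1 * w x1"
    using x x1 True phi_mono phi_nonneg w_mono_on w_nonneg_on by (intro mult_mono) auto
  moreover have "0 \<le> U0 x / x"
    using U0_nonneg[OF _ True] in_unit_interval[OF x] by simp
  ultimately show ?thesis
    by (intro mult_nonneg_nonneg) simp_all
next
  case False
  have "phi x1 * w x1 \<le> phi x * w x"
    using x x1 False phi_mono phi_nonneg w_mono_on w_nonneg_on by (intro mult_mono) auto
  moreover have "U0 x / x \<le> 0"
    using U0_neg[of x] False in_unit_interval[OF x] by (simp add: divide_nonpos_pos)
  ultimately show ?thesis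
    by (intro mult_nonpos_nonpos) simp_all
qed

lemma D_rate_ge:
  assumes "x1 \<le> x2" "x2 \<le> x3" "x3 \<le> t" "t \<le> b" "x1 < x3"
  shows "phi x2 * (w x3 - w x1) * (- U0 x3 / b) \<le> (phi x1 * w x1 - phi t * w t) * (U0 t / t)"
proof -
  have in_ab: "x1 \<in> {a..b}" "x2 \<in> {a..b}" "x3 \<in> {a..b}" "t \<in> {a..b}"
    using assms x1 by auto
  have "phi x2 * w x3 \<le> phi t * w t"
    using assms in_ab phi_mono phi_nonneg w_mono_on w_nonneg_on by (intro mult_mono) auto
  moreover have "phi x1 * w x1 \<le> phi x2 * w x1"
    using assms in_ab phi_mono w_nonneg_on by (intro mult_right_mono) auto
  ultimately have A: "phi x2 * (w x3 - w x1) \<le> phi t * w t - phi x1 * w x1"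
    by (simp add: right_diff_distrib)
  have "0 \<le> - U0 x3"
    using U0_neg[of x3] assms by simp
  moreover have "- U0 x3 \<le> - U0 t"
    using U0_antimono[of x3 t] assms in_unit_interval(1)[OF in_ab(3)] by simp
  ultimately have B: "- U0 x3 / b \<le> - U0 t / t"
    using assms in_unit_interval(1)[OF in_ab(4)] by (intro frac_le) auto
  have "0 \<le> phi x2 * (w x3 - w x1)"
    using in_ab assms phi_nonneg w_mono_on by simp
  moreover have "0 \<le> - U0 x3 / b"
    using \<open>0 \<le> - U0 x3\<close> ab by (intro divide_nonneg_pos) auto
  ultimately have "phi x2 * (w x3 - w x1) * (- U0 x3 / b) \<le> (phi t * w t - phi x1 * w x1) * (- U0 t / t)"
    using A B by (intro mult_mono) auto
  then show ?thesis
    by (simp add: algebra_simps)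
qed

lemma lam_gap:
  assumes "x2 \<in> {x1..<b}"
  obtains k where "0 < k" "k * phi x2 \<le> (lam - l0) * J b"
proof -
  define x3 where "x3 = (x2 + b) / 2"
  have x3: "x2 \<le> x3" "x3 < b" "x1 < x3"
    using assms by (auto simp: x3_def)
  define k where "k = (w x3 - w x1) * (- U0 x3 / b) * (b - x3)"
  have "w x1 < w x3"
    using x1 x3 ab by (intro w_strict_mono) auto
  moreover have "U0 x3 < 0"
    using U0_neg x3 by simp
  ultimately have "0 < k"
    unfolding k_def using x3 ab by (intro mult_pos_pos divide_pos_pos) auto
  have "0 * (x3 - a) \<le> D x3 - D a"
  proof (rule increment_ge[OF _ _ _ pointwise_lipschitz_F_G_Q_D(4)])
    show "a \<le> a" "a \<le> x3" "x3 \<le> b"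
      using x1 x3 by auto
    show "(D has_real_derivative (phi x1 * w x1 - phi x * w x) * (U0 x / x)) (at x)" if "regular x" for x
      using D_has_real_derivative that by (simp add: regular_def)
    show "0 \<le> (phi x1 * w x1 - phi x * w x) * (U0 x / x)" if "x \<in> {a<..<x3}" for x
      using D_rate_nonneg that x3 by simp
  qed
  moreover have "phi x2 * (w x3 - w x1) * (- U0 x3 / b) * (b - x3) \<le> D b - D x3"
  proof (rule increment_ge[OF _ _ _ pointwise_lipschitz_F_G_Q_D(4)])
    show "a \<le> x3" "x3 \<le> b" "b \<le> b"
      using x1 x3 by auto
    show "(D has_real_derivative (phi x1 * w x1 - phi x * w x) * (U0 x / x)) (at x)" if "regular x" for x
      using D_has_real_derivative that by (simp add: regular_def)
    show "phi x2 * (w x3 - w x1) * (- U0 x3 / b) \<le> (phi x1 * w x1 - phi x * w x) * (U0 x / x)"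
      if "x \<in> {x3<..<b}" for x
      using D_rate_ge x3 assms that by simp
  qed
  ultimately have "k * phi x2 \<le> D b - D a"
    by (simp add: k_def algebra_simps)
  with \<open>0 < k\<close> D_boundary show ?thesis
    using that by simp
qed

lemma l0_le_lam: "l0 \<le> lam"
proof -
  obtain k where "0 < k" "k * phi x1 \<le> (lam - l0) * J b"
    using lam_gap[of x1] x1 by auto
  moreover have "0 \<le> phi x1"
    using phi_nonneg x1 by simp
  ultimately have "0 \<le> (lam - l0) * J b"
    by (meson mult_nonneg_nonneg less_imp_le order_trans)
  with J_b_pos show ?thesis
    by (simp add: zero_le_mult_iff)
qed

lemma l0_less_lam:
  assumes "\<exists>x\<in>{a..<b}. \<rho> x \<noteq> 0"
  shows "l0 < lam"
proof -
  obtain y where y: "y \<in> {a..<b}" "\<rho> y \<noteq> 0"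
    using assms by blast
  define x2 where "x2 = max y x1"
  have x2: "x2 \<in> {x1..<b}" "x2 \<in> {a..b}" "y \<le> x2"
    using y x1 by (auto simp: x2_def)
  have "0 < m y"
    using y rho_nonneg zeta_pos_on[of y] by (auto simp: m_def less_le)
  also have "\<dots> \<le> m x2"
    using m_mono x2 y by simp
  finally have "0 < phi x2"
    using E_pos by (simp add: phi_def)
  obtain k where "0 < k" "k * phi x2 \<le> (lam - l0) * J b"
    using lam_gap[OF x2(1)] by blast
  with \<open>0 < phi x2\<close> have "0 < (lam - l0) * J b"
    by (meson mult_pos_pos order_less_le_trans)
  with J_b_pos show ?thesis
    by (simp add: zero_less_mult_iff)
qed

lemma Q_a: "Q a = 0" and Q_b: "Q b = 0"
  using ua ub U0_a U0_b by (simp_all add: Q_def)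

lemma Q_rate_ge: "x \<in> {a..b} \<Longrightarrow> x \<le> x1 \<Longrightarrow> lam - l0 \<le> Q_rate x"
  using m_nonneg[of x] U0_nonneg[of x] in_unit_interval(1)[of x] by (simp add: Q_rate_def)

lemma Q_rate_antimono:
  assumes "x1 \<le> x" "x \<le> y" "y \<le> b"
  shows "Q_rate y \<le> Q_rate x"
proof -
  have xy: "x \<in> {a..b}" "y \<in> {a..b}"
    using assms x1 by auto
  have "U0 y \<le> U0 x" "U0 x \<le> 0"
    using U0_antimono[of x y] U0_antimono[of x1 x] x1 ab assms in_unit_interval(1)[OF xy(1)] by auto
  moreover have "0 \<le> m x" "m x \<le> m y"
    using m_nonneg m_mono xy assms by auto
  ultimately have "m y * U0 y \<le> m x * U0 y" "m x * U0 y \<le> m x * U0 x"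
    by (auto intro: mult_right_mono_neg mult_left_mono order_trans)
  then show ?thesis
    by (simp add: Q_rate_def)
qed

text \<open>Where \<open>Q_rate\<close> is negative it stays negative up to \<open>b\<close>, so \<open>Q\<close> decreases to \<open>Q b = 0\<close>.\<close>
lemma Q_ge_if_rate_neg:
  assumes x: "x \<in> {a..b}" and neg: "Q_rate x < 0"
  shows "kappa a * zeta a * - Q_rate x * (b - x) \<le> Q x"
proof -
  have "x1 < x"
    using Q_rate_ge[OF x] l0_le_lam neg by fastforce
  have "kappa a * zeta a * - Q_rate x * (b - x) \<le> (0 - Q b) - (0 - Q x)"
  proof (rule increment_ge[OF _ _ _
        pointwise_lipschitz_on_diff[OF pointwise_lipschitz_on_const pointwise_lipschitz_F_G_Q_D(3)]
        DERIV_diff[OF DERIV_const Q_has_real_derivative]])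
    show "a \<le> x" "x \<le> b" "b \<le> b"
      using x by auto
    fix t assume t: "t \<in> {x<..<b}"
    then have "Q_rate t \<le> Q_rate x"
      using Q_rate_antimono \<open>x1 < x\<close> by simp
    moreover have "kappa a * zeta a \<le> E t * kappa t * zeta t"
      using E_kappa_zeta_ge t x by simp
    ultimately have "kappa a * zeta a * - Q_rate x \<le> E t * kappa t * zeta t * - Q_rate t"
      using neg kappa_zeta_a_pos by (intro mult_mono[of "kappa a * zeta a"]) auto
    then show "kappa a * zeta a * - Q_rate x \<le> 0 - E t * kappa t * zeta t * Q_rate t"
      by simp
  qed
  then show ?thesis
    using Q_b by simp
qed

text \<open>Where \<open>Q_rate\<close> is non-negative it is so on all of \<open>[a, x]\<close>, so \<open>Q\<close> increases from \<open>Q a = 0\<close>.\<close>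
lemma Q_ge_if_rate_nonneg:
  assumes x: "x \<in> {a..b}" and nonneg: "0 \<le> Q_rate x"
  shows "kappa a * zeta a * (lam - l0) * (min x x1 - a) \<le> Q x"
proof -
  define s where "s = min x x1"
  have s: "a \<le> s" "s \<le> x"
    using x x1 by (auto simp: s_def)
  have rate: "0 \<le> Q_rate t" if "t \<in> {a<..<x}" for t
  proof (cases "t \<le> x1")
    case True
    then show ?thesis
      using Q_rate_ge[of t] l0_le_lam that x by force
  next
    case False
    then show ?thesis
      using Q_rate_antimono[of t x] nonneg that x by force
  qed
  have "kappa a * zeta a * (lam - l0) * (s - a) \<le> Q s - Q a"
  proof (rule increment_ge[OF _ _ _ pointwise_lipschitz_F_G_Q_D(3) Q_has_real_derivative])
    show "a \<le> a" "a \<le> s" "s \<le> b"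
      using s x by auto
    fix t assume t: "t \<in> {a<..<s}"
    then have "lam - l0 \<le> Q_rate t"
      using Q_rate_ge[of t] x by (auto simp: s_def)
    moreover have "kappa a * zeta a \<le> E t * kappa t * zeta t"
      using E_kappa_zeta_ge t s x by simp
    ultimately show "kappa a * zeta a * (lam - l0) \<le> E t * kappa t * zeta t * Q_rate t"
      using l0_le_lam kappa_zeta_a_pos by (intro mult_mono[of "kappa a * zeta a"]) auto
  qed
  moreover have "0 * (x - s) \<le> Q x - Q s"
  proof (rule increment_ge[OF _ _ _ pointwise_lipschitz_F_G_Q_D(3) Q_has_real_derivative])
    show "a \<le> s" "s \<le> x" "x \<le> b"
      using s x by auto
    fix t assume t: "t \<in> {s<..<x}"
    then have "0 \<le> Q_rate t"
      using rate s by simp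
    moreover have "0 \<le> E t * kappa t * zeta t"
      using E_kappa_zeta_ge[of t] kappa_zeta_a_pos t s x by simp
    ultimately show "0 \<le> E t * kappa t * zeta t * Q_rate t"
      by simp
  qed
  ultimately show ?thesis
    using Q_a by (simp add: s_def)
qed

lemma Q_nonneg:
  assumes x: "x \<in> {a..b}"
  shows "0 \<le> Q x"
proof (cases "Q_rate x < 0")
  case True
  have "0 \<le> kappa a * zeta a * - Q_rate x * (b - x)"
    using True kappa_zeta_a_pos x by (intro mult_nonneg_nonneg[OF mult_nonneg_nonneg]) auto
  then show ?thesis
    using Q_ge_if_rate_neg[OF x True] by linarith
next
  case False
  have "0 \<le> kappa a * zeta a * (lam - l0) * (min x x1 - a)"
    using kappa_zeta_a_pos l0_le_lam x x1 by (intro mult_nonneg_nonneg[OF mult_nonneg_nonneg]) auto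
  then show ?thesis
    using Q_ge_if_rate_nonneg[OF x] False by linarith
qed

lemma Q_pos:
  assumes lam: "l0 < lam" and x: "x \<in> {a<..<b}"
  shows "0 < Q x"
proof (cases "Q_rate x < 0")
  case True
  have "0 < kappa a * zeta a * - Q_rate x * (b - x)"
    using True kappa_zeta_a_pos x by (intro mult_pos_pos[OF mult_pos_pos]) auto
  then show ?thesis
    using Q_ge_if_rate_neg[OF _ True] x by fastforce
next
  case False
  have "0 < kappa a * zeta a * (lam - l0) * (min x x1 - a)"
    using kappa_zeta_a_pos lam x x1 by (intro mult_pos_pos[OF mult_pos_pos]) auto
  then show ?thesis
    using Q_ge_if_rate_nonneg[of x] False x by fastforce
qed

lemma Q_eq_scaled_gap: "x \<in> {a..b} \<Longrightarrow> Q x = (kappa x * E x) * (U0 x - u x) \<and> 0 < kappa x * E x"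
  using kappa_pos[of x] E_pos[of x] in_unit_interval[of x] by (simp add: Q_def ac_simps)

lemma u_le_U0: "x \<in> {a..b} \<Longrightarrow> u x \<le> U0 x"
  using Q_nonneg[of x] Q_eq_scaled_gap[of x] by (simp add: zero_le_mult_iff)

lemma u_less_U0:
  assumes "\<exists>y\<in>{a..<b}. \<rho> y \<noteq> 0" and x: "x \<in> {a<..<b}"
  shows "u x < U0 x"
proof -
  have "0 < Q x"
    using Q_pos[OF l0_less_lam[OF assms(1)] x] .
  moreover have "Q x = (kappa x * E x) * (U0 x - u x)" "0 < kappa x * E x"
    using Q_eq_scaled_gap[of x] x by auto
  ultimately show ?thesis
    by (simp add: zero_less_mult_iff)
qed

section \<open>Distribution functions\<close>

lemma U0_level:
  assumes "t \<in> {0<..<1}"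
  obtains X where "a < X" "X < b" "U0 X = t"
proof -
  have "continuous_on {a..b} U0"
    using pointwise_lipschitz_basic(5) by (rule pointwise_lipschitz_on_imp_continuous_on)
  then obtain X where X: "a \<le> X" "X \<le> b" "U0 X = t"
    using IVT2'[of U0 b t a] assms U0_a U0_b ab by auto
  moreover have "X \<noteq> a" "X \<noteq> b"
    using X assms U0_a U0_b by auto
  ultimately show ?thesis
    using that[of X] by linarith
qed

lemma superlevel_u_subset:
  assumes "0 < X" "U0 X = t"
  shows "{x \<in> {a..b}. t < u x} \<subseteq> {a..X}"
proof
  fix x assume x: "x \<in> {x \<in> {a..b}. t < u x}"
  then have "U0 X < U0 x"
    using u_le_U0[of x] assms by auto
  then have "x \<le> X"
    using U0_antimono[of X x] assms by (cases "x \<le> X") auto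
  with x show "x \<in> {a..X}"
    by simp
qed

lemma superlevel_neg_u_ge:
  assumes X: "a < X" "X < b" "U0 X = t"
  shows "ennreal (ln X - ln a) \<le> mu_dist (\<lambda>x. - u x) a b t"
proof -
  define Y where "Y = a * b / X"
  have Y: "0 < Y" "a < Y" "Y \<le> b" "U0 Y = - t"
    using X ab U0_reflect[of X] by (auto simp: Y_def field_simps)
  have "ln X - ln a = ln b - ln Y"
    using X ab by (simp add: Y_def ln_div ln_mult)
  then have measure_eq: "emeasure mu {Y<..<b} = ennreal (ln X - ln a)"
    using emeasure_mu_Ioo[of Y b] Y by simp
  have subset: "{Y<..<b} \<subseteq> {x \<in> {a..b}. t < - u x}"
  proof
    fix x assume x: "x \<in> {Y<..<b}"
    then have "U0 x < - t"
      using U0_strict_antimono[of Y x] Y by simp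
    with x Y show "x \<in> {x \<in> {a..b}. t < - u x}"
      using u_le_U0[of x] by auto
  qed
  have measurable: "{x \<in> {a..b}. t < - u x} \<in> sets mu"
  proof -
    have "continuous_on {a..b} (\<lambda>x. - u x)"
      by (intro continuous_intros pointwise_lipschitz_on_imp_continuous_on pointwise_lipschitz_basic(1))
    then obtain A where "open A" "A \<inter> {a..b} = (\<lambda>x. - u x) -` {t<..} \<inter> {a..b}"
      unfolding continuous_on_open_invariant using open_greaterThan by blast
    then have "{x \<in> {a..b}. t < - u x} = A \<inter> {a..b}"
      by auto
    with \<open>open A\<close> show ?thesis
      by (simp add: sets_mu)
  qed
  show ?thesis
    unfolding mu_dist_def using emeasure_mono[OF subset measurable] measure_eq by simp
qed

lemma mu_dist_le: "t \<in> {0<..<1} \<Longrightarrow> mu_dist u a b t \<le> mu_dist (\<lambda>x. - u x) a b t"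
proof -
  assume "t \<in> {0<..<1}"
  then obtain X where X: "a < X" "X < b" "U0 X = t"
    by (rule U0_level)
  have "mu_dist u a b t \<le> emeasure mu {a..X}"
    unfolding mu_dist_def using superlevel_u_subset[of X t] X ab by (intro emeasure_mono) (auto simp: sets_mu)
  also have "\<dots> = ennreal (ln X - ln a)"
    using emeasure_mu_Icc[of a X] X ab by simp
  also have "\<dots> \<le> mu_dist (\<lambda>x. - u x) a b t"
    using superlevel_neg_u_ge[OF X] .
  finally show ?thesis .
qed

lemma mu_dist_less:
  assumes rho: "\<exists>y\<in>{a..<b}. \<rho> y \<noteq> 0" and t: "t \<in> {0<..<1}"
  shows "mu_dist u a b t < mu_dist (\<lambda>x. - u x) a b t"
proof -
  obtain X where X: "a < X" "X < b" "U0 X = t"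
    using t by (rule U0_level)
  have "(u \<longlongrightarrow> u X) (at X within {a..b})"
    using pointwise_lipschitz_on_imp_continuous_on[OF pointwise_lipschitz_basic(1)] X
    by (simp add: continuous_on_eq_continuous_within continuous_within)
  moreover have "u X < t"
    using u_less_U0[OF rho, of X] X by simp
  ultimately have "\<forall>\<^sub>F x in at X within {a..b}. u x < t"
    by (rule order_tendstoD(2))
  then obtain d where "d > 0" and d: "\<And>x. x \<in> {a..b} \<Longrightarrow> x \<noteq> X \<Longrightarrow> dist x X < d \<Longrightarrow> u x < t"
    unfolding eventually_at by blast
  define X' where "X' = max a (X - d)"
  have X': "a \<le> X'" "X' < X"
    using X \<open>d > 0\<close> by (auto simp: X'_def)
  have "{x \<in> {a..b}. t < u x} \<subseteq> {a..X'}"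
  proof
    fix x assume x: "x \<in> {x \<in> {a..b}. t < u x}"
    then have "x \<le> X" "x \<noteq> X"
      using superlevel_u_subset[of X t] X ab \<open>u X < t\<close> by auto
    moreover have "\<not> dist x X < d"
      using d[of x] x \<open>x \<noteq> X\<close> by auto
    ultimately have "x \<le> X - d"
      by (simp add: dist_real_def)
    with x show "x \<in> {a..X'}"
      by (simp add: X'_def)
  qed
  then have "mu_dist u a b t \<le> emeasure mu {a..X'}"
    unfolding mu_dist_def by (intro emeasure_mono) (auto simp: sets_mu)
  also have "\<dots> = ennreal (ln X' - ln a)"
    using emeasure_mu_Icc[of a X'] X' ab by simp
  also have "\<dots> < ennreal (ln X - ln a)"
    using X X' ab by (intro ennreal_lessI) auto
  also have "\<dots> \<le> mu_dist (\<lambda>x. - u x) a b t"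
    using superlevel_neg_u_ge[OF X] .
  finally show ?thesis .
qed

end

theorem mainTheorem12:
  fixes a b lam L :: real and \<rho> u :: "real \<Rightarrow> real"
  assumes ab: "0 < a" "a < b" "b < 1"
    and rho_nonneg: "\<forall>x\<in>{a..b}. \<rho> x \<ge> 0"
    and rho_mono: "mono_on {a..b} (\<lambda>x. \<rho> x / zeta x)"
    and rho_bdd: "bounded ((\<lambda>x. \<rho> x / zeta x) ` {a..b})"
    and u_lip: "L-lipschitz_on {a..b} u"
    and ode: "AE x in lborel. x \<in> {a<..<b} \<longrightarrow>
       (u has_real_derivative (- ((1 / x + rho_tilde \<rho> x) * u x + lam * zeta x))) (at x)"
    and ua: "u a = 1" and ub: "u b = -1"
    and u_gt: "\<forall>x\<in>{a..<b}. u x > -1"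
  shows "(\<forall>t\<in>{0<..<1}. mu_dist u a b t \<le> mu_dist (\<lambda>x. - u x) a b t)
       \<and> ((\<exists>x\<in>{a..<b}. \<rho> x \<noteq> 0) \<longrightarrow>
            (\<forall>t\<in>{0<..<1}. mu_dist u a b t < mu_dist (\<lambda>x. - u x) a b t))"
proof -
  interpret ode_setting a b lam L \<rho> u
    using ab rho_nonneg rho_mono u_lip ode ua ub by unfold_locales
  show ?thesis
    using mu_dist_le mu_dist_less by blast
qed

end
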